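(* Let $\mathcal F\subset 2^{\mathbb N}$ be a Furstenberg family, let $X_1,X_2$ be Polish topological vector spaces, and let $T_1\in\mathfrak L(X_1)$, $T_2\in\mathfrak L(X_2)$. If $T_1$ is $\mathcal F$-hypercyclic and $T_2$ is hereditarily $\mathcal F$-hypercyclic, then $T_1\oplus T_2$ is $\mathcal F$-hypercyclic on $X_1\times X_2$. If both $T_1$ and $T_2$ are hereditarily $\mathcal F$-hypercyclic, then $T_1\oplus T_2$ is hereditarily $\mathcal F$-hypercyclic.
   Context: A Furstenberg family is a family of non-empty subsets of $\mathbb N$ which is hereditary upwards ($A\in\mathcal F$, $A\subset A'$ implies $A'\in\mathcal F$). $\mathcal N_T(x,V):=\{n\in\mathbb N:T^nx\in V\}$. $T$ is $\mathcal F$-hypercyclic if there is $x$ with $\mathcal N_T(x,V)\in\mathcal F$ for every non-empty open $V$. $T$ is hereditarily $\mathcal F$-hypercyclic if for every countable family $(V_i)_{i\in I}$ of non-empty open sets and every family $(A_i)_{i\in I}\subset\mathcal F$, there is $x$ with $\mathcal N_T(x,V_i)\cap A_i\in\mathcal F$ for all $i\in I$. *)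

theory Defs
  imports "HOL-Analysis.Analysis"
begin

definition furstenberg_family :: "nat set set \<Rightarrow> bool" where
  "furstenberg_family F \<longleftrightarrow>
     (\<forall>A\<in>F. A \<noteq> {}) \<and> (\<forall>A B. A \<in> F \<longrightarrow> A \<subseteq> B \<longrightarrow> B \<in> F)"

definition return_set :: "('a \<Rightarrow> 'a) \<Rightarrow> 'a \<Rightarrow> 'a set \<Rightarrow> nat set" where
  "return_set T x V = {n. (T ^^ n) x \<in> V}"

definition F_hypercyclic :: "nat set set \<Rightarrow> ('a::topological_space \<Rightarrow> 'a) \<Rightarrow> bool" where
  "F_hypercyclic F T \<longleftrightarrow>
     (\<exists>x. \<forall>V. open V \<and> V \<noteq> {} \<longrightarrow> return_set T x V \<in> F)"

text \<open>Countable index families are indexed by subsets of nat (no loss of generality).\<close>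
definition hereditarily_F_hypercyclic :: "nat set set \<Rightarrow> ('a::topological_space \<Rightarrow> 'a) \<Rightarrow> bool" where
  "hereditarily_F_hypercyclic F T \<longleftrightarrow>
     (\<forall>(I::nat set) (V::nat \<Rightarrow> 'a set) (A::nat \<Rightarrow> nat set).
        (\<forall>i\<in>I. open (V i) \<and> V i \<noteq> {} \<and> A i \<in> F) \<longrightarrow>
        (\<exists>x. \<forall>i\<in>I. return_set T x (V i) \<inter> A i \<in> F))"

definition polish_tvs :: "('a::{real_vector, polish_space}) itself \<Rightarrow> bool" where
  "polish_tvs _ \<longleftrightarrow>
     continuous_on UNIV (\<lambda>p::'a \<times> 'a. fst p + snd p) \<and>
     continuous_on UNIV (\<lambda>p::real \<times> 'a. fst p *\<^sub>R snd p)"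

definition bounded_operator :: "('a::{real_vector, topological_space} \<Rightarrow> 'a) \<Rightarrow> bool" where
  "bounded_operator T \<longleftrightarrow> linear T \<and> continuous_on UNIV T"

definition direct_sum :: "('a \<Rightarrow> 'a) \<Rightarrow> ('b \<Rightarrow> 'b) \<Rightarrow> ('a \<times> 'b \<Rightarrow> 'a \<times> 'b)" where
  "direct_sum T1 T2 = (\<lambda>(x, y). (T1 x, T2 y))"

end

theory Submission
  imports Defs
begin

text \<open>The orbit of \<open>(x, y)\<close> visits a rectangle \<open>U \<times> W\<close> exactly when the two orbits visit
  \<open>U\<close> and \<open>W\<close> at the same time. Since every nonempty open set of the product contains such a
  rectangle, it suffices to find, for a given point \<open>x\<close>, a point \<open>y\<close> whose visits to \<open>W\<close>
  inside the \<open>\<F>\<close>-set of visits of \<open>x\<close> to \<open>U\<close> still form an \<open>\<F>\<close>-set; this is exactly what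
  hereditary \<open>\<F>\<close>-hypercyclicity of \<open>T\<^sub>2\<close> provides, for countably many rectangles at once.
  In the first claim the countably many rectangles come from countable bases of the factors.\<close>

lemma furstenberg_family_mono:
  assumes "furstenberg_family F" "A \<in> F" "A \<subseteq> B"
  shows "B \<in> F"
  using assms unfolding furstenberg_family_def by blast

lemma return_set_mono: "V \<subseteq> V' \<Longrightarrow> return_set T x V \<subseteq> return_set T x V'"
  by (auto simp: return_set_def)

lemma funpow_direct_sum: "(direct_sum T1 T2 ^^ n) (x, y) = ((T1 ^^ n) x, (T2 ^^ n) y)"
  by (induction n) (auto simp: direct_sum_def)

lemma return_set_direct_sum_Times:
  "return_set (direct_sum T1 T2) (x, y) (U \<times> W) = return_set T1 x U \<inter> return_set T2 y W"
  by (auto simp: return_set_def funpow_direct_sum)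

lemma open_nonempty_contains_open_Times:
  fixes V :: "('a::topological_space \<times> 'b::topological_space) set"
  assumes "open V" "V \<noteq> {}"
  shows "\<exists>U W. open U \<and> U \<noteq> {} \<and> open W \<and> W \<noteq> {} \<and> U \<times> W \<subseteq> V"
proof -
  obtain p where "p \<in> V" using assms(2) by blast
  with assms(1) obtain U W where "open U" "open W" "p \<in> U \<times> W" "U \<times> W \<subseteq> V"
    by (rule open_prod_elim)
  then show ?thesis by blast
qed

lemma ex_countable_open_Times_base:
  obtains U :: "nat \<Rightarrow> 'a::second_countable_topology set"
    and W :: "nat \<Rightarrow> 'b::second_countable_topology set"
  where "\<And>i. open (U i) \<and> U i \<noteq> {} \<and> open (W i) \<and> W i \<noteq> {}"
    and "\<And>V. open V \<Longrightarrow> V \<noteq> {} \<Longrightarrow> \<exists>i. U i \<times> W i \<subseteq> V"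
proof -
  obtain B1 :: "'a set set" where B1: "countable B1" "topological_basis B1"
    using ex_countable_basis by blast
  obtain B2 :: "'b set set" where B2: "countable B2" "topological_basis B2"
    using ex_countable_basis by blast
  define P where "P = (B1 - {{}}) \<times> (B2 - {{}})"
  have countable_P: "countable P"
    using B1(1) B2(1) by (simp add: P_def)
  have P_inside: "\<exists>p\<in>P. fst p \<times> snd p \<subseteq> V" if V: "open V" "V \<noteq> {}" for V
  proof -
    obtain U W where UW: "open U" "U \<noteq> {}" "open W" "W \<noteq> {}" "U \<times> W \<subseteq> V"
      using open_nonempty_contains_open_Times[OF V] by blast
    obtain a b where "a \<in> U" "b \<in> W" using UW by blast
    obtain U' where "U' \<in> B1" "a \<in> U'" "U' \<subseteq> U"
      using topological_basisE[OF B1(2) \<open>open U\<close> \<open>a \<in> U\<close>] by blast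
    moreover obtain W' where "W' \<in> B2" "b \<in> W'" "W' \<subseteq> W"
      using topological_basisE[OF B2(2) \<open>open W\<close> \<open>b \<in> W\<close>] by blast
    ultimately show ?thesis
      using UW(5) unfolding P_def by (intro bexI[of _ "(U', W')"]) auto
  qed
  then have "P \<noteq> {}" by fastforce
  then have range_P: "range (from_nat_into P) = P"
    using countable_P by simp
  show thesis
  proof (rule that[of "\<lambda>i. fst (from_nat_into P i)" "\<lambda>i. snd (from_nat_into P i)"])
    fix i
    have "from_nat_into P i \<in> P" using range_P by blast
    then show "open (fst (from_nat_into P i)) \<and> fst (from_nat_into P i) \<noteq> {} \<and>
        open (snd (from_nat_into P i)) \<and> snd (from_nat_into P i) \<noteq> {}"
      using topological_basis_open[OF B1(2)] topological_basis_open[OF B2(2)]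
      by (auto simp: P_def)
  next
    fix V :: "('a \<times> 'b) set"
    assume "open V" "V \<noteq> {}"
    then obtain p where "p \<in> P" "fst p \<times> snd p \<subseteq> V"
      using P_inside by blast
    moreover from \<open>p \<in> P\<close> obtain i where "p = from_nat_into P i"
      using range_P by blast
    ultimately show "\<exists>i. fst (from_nat_into P i) \<times> snd (from_nat_into P i) \<subseteq> V"
      by blast
  qed
qed

lemma hereditarily_F_hypercyclicD:
  fixes I :: "nat set"
  assumes "hereditarily_F_hypercyclic F T"
    and "\<And>i. i \<in> I \<Longrightarrow> open (V i) \<and> V i \<noteq> {} \<and> A i \<in> F"
  obtains x where "\<And>i. i \<in> I \<Longrightarrow> return_set T x (V i) \<inter> A i \<in> F"
  using assms(1)[unfolded hereditarily_F_hypercyclic_def, rule_format, of I V A] assms(2) by blast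

lemma hereditarily_F_hypercyclic_extend_to_Times:
  fixes I :: "nat set"
  assumes "hereditarily_F_hypercyclic F T2"
    and "\<And>i. i \<in> I \<Longrightarrow> open (W i) \<and> W i \<noteq> {} \<and> return_set T1 x (U i) \<inter> A i \<in> F"
  obtains y where "\<And>i. i \<in> I \<Longrightarrow> return_set (direct_sum T1 T2) (x, y) (U i \<times> W i) \<inter> A i \<in> F"
proof -
  obtain y where y: "\<And>i. i \<in> I \<Longrightarrow> return_set T2 y (W i) \<inter> (return_set T1 x (U i) \<inter> A i) \<in> F"
    using hereditarily_F_hypercyclicD[OF assms(1), of I W "\<lambda>i. return_set T1 x (U i) \<inter> A i"]
      assms(2) by blast
  have eq: "return_set T2 y (W i) \<inter> (return_set T1 x (U i) \<inter> A i) =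
      return_set (direct_sum T1 T2) (x, y) (U i \<times> W i) \<inter> A i" for i
    by (auto simp: return_set_direct_sum_Times)
  show thesis
    using y by (intro that[of y]) (simp add: eq)
qed

lemma F_hypercyclic_direct_sum:
  fixes T1 :: "'a::second_countable_topology \<Rightarrow> 'a"
    and T2 :: "'b::second_countable_topology \<Rightarrow> 'b"
  assumes F: "furstenberg_family F"
    and "F_hypercyclic F T1" "hereditarily_F_hypercyclic F T2"
  shows "F_hypercyclic F (direct_sum T1 T2)"
proof -
  obtain x where x: "\<And>V. open V \<Longrightarrow> V \<noteq> {} \<Longrightarrow> return_set T1 x V \<in> F"
    using assms(2) unfolding F_hypercyclic_def by blast
  obtain U :: "nat \<Rightarrow> 'a set" and W :: "nat \<Rightarrow> 'b set"
    where UW: "\<And>i. open (U i) \<and> U i \<noteq> {} \<and> open (W i) \<and> W i \<noteq> {}"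
      and inside: "\<And>V. open V \<Longrightarrow> V \<noteq> {} \<Longrightarrow> \<exists>i. U i \<times> W i \<subseteq> V"
    using ex_countable_open_Times_base by blast
  obtain y where y: "\<And>i. return_set (direct_sum T1 T2) (x, y) (U i \<times> W i) \<in> F"
    using hereditarily_F_hypercyclic_extend_to_Times[OF assms(3),
        of UNIV W T1 x U "\<lambda>_. UNIV"] UW x by auto
  have "return_set (direct_sum T1 T2) (x, y) V \<in> F" if V: "open V" "V \<noteq> {}" for V
  proof -
    obtain i where "U i \<times> W i \<subseteq> V"
      using inside[OF V] by blast
    then show ?thesis
      using furstenberg_family_mono[OF F y return_set_mono] by blast
  qed
  then show ?thesis
    unfolding F_hypercyclic_def by blast
qed

lemma hereditarily_F_hypercyclic_direct_sum:
  fixes T1 :: "'a::topological_space \<Rightarrow> 'a"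
    and T2 :: "'b::topological_space \<Rightarrow> 'b"
  assumes F: "furstenberg_family F"
    and "hereditarily_F_hypercyclic F T1" "hereditarily_F_hypercyclic F T2"
  shows "hereditarily_F_hypercyclic F (direct_sum T1 T2)"
  unfolding hereditarily_F_hypercyclic_def
proof (intro allI impI)
  fix I :: "nat set" and V :: "nat \<Rightarrow> ('a \<times> 'b) set" and A
  assume V: "\<forall>i\<in>I. open (V i) \<and> V i \<noteq> {} \<and> A i \<in> F"
  have "\<forall>i\<in>I. \<exists>U W. open U \<and> U \<noteq> {} \<and> open W \<and> W \<noteq> {} \<and> U \<times> W \<subseteq> V i"
  proof
    fix i
    assume "i \<in> I"
    with V show "\<exists>U W. open U \<and> U \<noteq> {} \<and> open W \<and> W \<noteq> {} \<and> U \<times> W \<subseteq> V i"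
      by (intro open_nonempty_contains_open_Times) auto
  qed
  then obtain U where "\<forall>i\<in>I. \<exists>W. open (U i) \<and> U i \<noteq> {} \<and> open W \<and> W \<noteq> {} \<and> U i \<times> W \<subseteq> V i"
    by (rule bchoice[THEN exE])
  then obtain W where UW: "\<forall>i\<in>I.
      open (U i) \<and> U i \<noteq> {} \<and> open (W i) \<and> W i \<noteq> {} \<and> U i \<times> W i \<subseteq> V i"
    by (rule bchoice[THEN exE])
  obtain x where "\<And>i. i \<in> I \<Longrightarrow> return_set T1 x (U i) \<inter> A i \<in> F"
    using hereditarily_F_hypercyclicD[OF assms(2), of I U A] UW V by blast
  then obtain y where y: "\<And>i. i \<in> I \<Longrightarrow> return_set (direct_sum T1 T2) (x, y) (U i \<times> W i) \<inter> A i \<in> F"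
    using hereditarily_F_hypercyclic_extend_to_Times[OF assms(3), of I W T1 x U A] UW by blast
  have "return_set (direct_sum T1 T2) (x, y) (V i) \<inter> A i \<in> F" if "i \<in> I" for i
  proof (rule furstenberg_family_mono[OF F y[OF that]])
    show "return_set (direct_sum T1 T2) (x, y) (U i \<times> W i) \<inter> A i
        \<subseteq> return_set (direct_sum T1 T2) (x, y) (V i) \<inter> A i"
      using UW that by (intro Int_mono return_set_mono order_refl) blast
  qed
  then show "\<exists>z. \<forall>i\<in>I. return_set (direct_sum T1 T2) z (V i) \<inter> A i \<in> F"
    by blast
qed

theorem proposition4p1:
  fixes F :: "nat set set"
    and T1 :: "'a::{real_vector, polish_space} \<Rightarrow> 'a"
    and T2 :: "'b::{real_vector, polish_space} \<Rightarrow> 'b"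
  assumes "furstenberg_family F"
    and "polish_tvs TYPE('a)" and "polish_tvs TYPE('b)"
    and "bounded_operator T1" and "bounded_operator T2"
  shows "(F_hypercyclic F T1 \<and> hereditarily_F_hypercyclic F T2
           \<longrightarrow> F_hypercyclic F (direct_sum T1 T2)) \<and>
         (hereditarily_F_hypercyclic F T1 \<and> hereditarily_F_hypercyclic F T2
           \<longrightarrow> hereditarily_F_hypercyclic F (direct_sum T1 T2))"
  by (auto intro: F_hypercyclic_direct_sum[OF assms(1)]
      hereditarily_F_hypercyclic_direct_sum[OF assms(1)])

end
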